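(* Let $p$ be an odd prime, and let $a,b\in\mathbb{Z}$ with $\left(\frac ap\right)=1$ and $\left(\frac bp\right)=-1$. Then $$s_p(a)s_p(b)=\begin{cases}(-1)^{(p+3)/4}\delta(ab,p)&\text{if } p\equiv1\pmod4,\\(-1)^{(p-3)/4}&\text{if } p\equiv3\pmod4.\end{cases}$$
   Context: $\left(\frac{\cdot}{p}\right)$ is the Legendre symbol. For an integer $m$, $\{m\}_p$ denotes the least nonnegative residue of $m$ modulo $p$. For an integer $a\not\equiv0\pmod p$, $$s_p(a)=(-1)^{|\{\{j,k\}:\ 1\le j<k\le (p-1)/2\ \text{and}\ \{aj^2\}_p>\{ak^2\}_p\}|}.$$ For $p\equiv1\pmod 4$ and an integer $c$, $\delta(c,p)=1$ if $c^{(p-1)/4}\equiv\left(\frac{p-1}{2}\right)!\pmod p$ and $\delta(c,p)=-1$ otherwise. *)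

theory Defs
  imports "HOL-Number_Theory.Number_Theory"
begin

definition sp :: "int \<Rightarrow> int \<Rightarrow> int" where
  "sp p a = (-1) ^ card {(j::int, k::int). 1 \<le> j \<and> j < k \<and> k \<le> (p - 1) div 2
                 \<and> (a * j^2) mod p > (a * k^2) mod p}"

definition delta :: "int \<Rightarrow> int \<Rightarrow> int" where
  "delta c p = (if [c ^ nat ((p - 1) div 4) = fact (nat ((p - 1) div 2))] (mod p) then 1 else -1)"

end

theory Submission
  imports Defs
begin

(* For c prime to p the map j \<mapsto> {c j^2}_p is injective on {1..n}, n = (p - 1)/2, and s_p(c) is the
   sign of the permutation sorting its values.  Writing Q(S) for the product of v - u over the pairs
   u < v of S, the product of {c k^2}_p - {c j^2}_p over j < k is therefore s_p(c) Q(S_c), S_c being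
   the image, and it is congruent to c^m D with m = n(n - 1)/2 and D the product of k^2 - j^2.
   S_a is the set R of quadratic residues in {1..p - 1} and S_b the set N of non-residues, so
   s_p(a) s_p(b) \<kappa> = (ab)^m (mod p) whenever Q(N) = \<kappa> Q(R) (mod p).
   If p = 3 (mod 4) then N = p - R and \<kappa> = 1.  If p = 1 (mod 4) then R and N are both symmetric
   under x \<mapsto> p - x; splitting Q({1..p - 1}) = 0! 1! ... (p - 2)! along R and N and evaluating
   everything with Wilson's theorem gives \<kappa> = n!.  Euler's criterion (ab)^n = -1 fixes the signs. *)


section \<open>Products of pairwise differences\<close>

definition less_pairs :: "'a::linorder set \<Rightarrow> ('a \<times> 'a) set" where
  "less_pairs A = {(u, v). u \<in> A \<and> v \<in> A \<and> u < v}"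

definition pair_diff_prod :: "int set \<Rightarrow> int" where
  "pair_diff_prod A = (\<Prod>(u, v)\<in>less_pairs A. v - u)"

lemma mem_less_pairs_iff [simp]: "(u, v) \<in> less_pairs A \<longleftrightarrow> u \<in> A \<and> v \<in> A \<and> u < v"
  by (simp add: less_pairs_def)

lemma finite_less_pairs [simp]: "finite A \<Longrightarrow> finite (less_pairs A)"
  by (rule finite_subset[of _ "A \<times> A"]) (auto simp: less_pairs_def)

lemma card_less_pairs:
  assumes "finite A"
  shows "2 * card (less_pairs A) = card A * (card A - 1)"
proof -
  let ?D = "(\<lambda>x. (x, x)) ` A" and ?L = "less_pairs A"
  have split: "A \<times> A = ?D \<union> (?L \<union> prod.swap ` ?L)"
    by (auto simp: less_pairs_def image_iff)
  have "card (A \<times> A) = card ?D + card (?L \<union> prod.swap ` ?L)"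
    unfolding split using assms by (intro card_Un_disjoint) auto
  also have "card (?L \<union> prod.swap ` ?L) = card ?L + card (prod.swap ` ?L)"
    using assms by (intro card_Un_disjoint) auto
  finally show ?thesis
    by (simp add: card_cartesian_product card_image inj_on_convol_ident diff_mult_distrib2)
qed

lemma card_cross_less_reflect:
  fixes A B :: "int set"
  assumes "finite A" "finite B" "A \<inter> B = {}"
    and reflect_A: "(\<lambda>x. c - x) ` A = A" and reflect_B: "(\<lambda>x. c - x) ` B = B"
  shows "2 * card {(a, b) \<in> A \<times> B. a < b} = card A * card B"
proof -
  let ?L = "{(a, b) \<in> A \<times> B. a < b}" and ?G = "{(a, b) \<in> A \<times> B. b < a}"
  let ?r = "\<lambda>(a, b). (c - a, c - b)"
  have "x \<in> A \<Longrightarrow> c - x \<in> A" "x \<in> B \<Longrightarrow> c - x \<in> B" for x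
    using reflect_A reflect_B by blast+
  then have "bij_betw ?r ?L ?G"
    by (intro bij_betw_byWitness[where f' = ?r]) auto
  then have "card ?L = card ?G"
    by (rule bij_betw_same_card)
  have "A \<times> B = ?L \<union> ?G"
    using assms(3) by auto
  then have "card A * card B = card (?L \<union> ?G)"
    by (metis card_cartesian_product)
  also have "\<dots> = card ?L + card ?G"
    using assms by (intro card_Un_disjoint) (auto intro: finite_subset[of _ "A \<times> B"])
  finally show ?thesis
    using \<open>card ?L = card ?G\<close> by simp
qed

lemma prod_less_pairs_diff_image:
  fixes f :: "'a::linorder \<Rightarrow> int"
  assumes inj: "inj_on f I" and fin: "finite I"
  shows "(\<Prod>(j, k)\<in>less_pairs I. f k - f j)
    = (-1) ^ card {(j, k) \<in> less_pairs I. f k < f j} * pair_diff_prod (f ` I)"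
proof -
  define h where "h = (\<lambda>(j, k). (min (f j) (f k), max (f j) (f k)))"
  define g where "g = the_inv_into I f"
  have gf: "g (f x) = x" if "x \<in> I" for x
    using the_inv_into_f_f[OF inj that] by (simp add: g_def)
  have abs: "pair_diff_prod (f ` I) = (\<Prod>(j, k)\<in>less_pairs I. \<bar>f k - f j\<bar>)"
    unfolding pair_diff_prod_def
    by (rule prod.reindex_bij_witness[where i = h and j = "\<lambda>(u, v). (min (g u) (g v), max (g u) (g v))"])
       (auto simp: less_pairs_def h_def gf min_def max_def le_less not_less inj_on_eq_iff[OF inj])
  have inv: "{(j, k) \<in> less_pairs I. f k < f j} = less_pairs I \<inter> {(j, k). f k < f j}"
    by auto
  have "(\<Prod>(j, k)\<in>less_pairs I. f k - f j)
      = (\<Prod>x\<in>less_pairs I. (if x \<in> {(j, k). f k < f j} then -1 else 1) * (case x of (j, k) \<Rightarrow> \<bar>f k - f j\<bar>))"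
    by (rule prod.cong) auto
  also have "\<dots> = (-1) ^ card {(j, k) \<in> less_pairs I. f k < f j} * (\<Prod>(j, k)\<in>less_pairs I. \<bar>f k - f j\<bar>)"
    unfolding inv using fin by (simp add: prod.distrib prod.If_cases)
  finally show ?thesis
    using abs by simp
qed

lemma pair_diff_prod_Un:
  assumes "finite A" "finite B" "A \<inter> B = {}"
  shows "pair_diff_prod (A \<union> B) = (-1) ^ card {(a, b) \<in> A \<times> B. a < b}
    * pair_diff_prod A * pair_diff_prod B * (\<Prod>(a, b)\<in>A \<times> B. a - b)"
proof -
  let ?C = "{(a, b) \<in> A \<times> B. a < b}" and ?C' = "{(a, b) \<in> A \<times> B. b < a}"
  have fin: "finite ?C" "finite ?C'"
    using assms by (auto intro: finite_subset[of _ "A \<times> B"])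
  have split: "less_pairs (A \<union> B) = (less_pairs A \<union> less_pairs B) \<union> (?C \<union> prod.swap ` ?C')"
    using assms by (auto simp: less_pairs_def image_iff)
  have "pair_diff_prod (A \<union> B)
      = (\<Prod>(u, v)\<in>less_pairs A \<union> less_pairs B. v - u) * (\<Prod>(u, v)\<in>?C \<union> prod.swap ` ?C'. v - u)"
    unfolding pair_diff_prod_def split
    by (rule prod.union_disjoint) (use assms fin in \<open>auto\<close>)
  also have "(\<Prod>(u, v)\<in>less_pairs A \<union> less_pairs B. v - u) = pair_diff_prod A * pair_diff_prod B"
    unfolding pair_diff_prod_def
    by (rule prod.union_disjoint) (use assms in \<open>auto\<close>)
  also have "(\<Prod>(u, v)\<in>?C \<union> prod.swap ` ?C'. v - u) = (\<Prod>(a, b)\<in>?C. b - a) * (\<Prod>(a, b)\<in>?C'. a - b)"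
    using assms(3) fin by (subst prod.union_disjoint) (auto simp: prod.reindex)
  also have "(\<Prod>(a, b)\<in>?C. b - a) = (-1) ^ card ?C * (\<Prod>(a, b)\<in>?C. a - b)"
    by (subst prod_uminus[symmetric]) (auto intro: prod.cong)
  also have "(-1) ^ card ?C * (\<Prod>(a, b)\<in>?C. a - b) * (\<Prod>(a, b)\<in>?C'. a - b)
      = (-1) ^ card ?C * (\<Prod>(a, b)\<in>A \<times> B. a - b)"
  proof -
    have "(\<Prod>(a, b)\<in>?C. a - b) * (\<Prod>(a, b)\<in>?C'. a - b) = (\<Prod>(a, b)\<in>?C \<union> ?C'. a - b)"
      by (rule prod.union_disjoint[symmetric]) (use fin in auto)
    also have "?C \<union> ?C' = A \<times> B"
      using assms(3) by auto
    finally show ?thesis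
      by (simp add: mult.assoc)
  qed
  finally show ?thesis
    by (simp add: ac_simps)
qed

lemma pair_diff_prod_reflect: "pair_diff_prod ((\<lambda>x. c - x) ` A) = pair_diff_prod A"
  unfolding pair_diff_prod_def
  by (rule prod.reindex_bij_witness[where i = "\<lambda>(u, v). (c - v, c - u)" and j = "\<lambda>(u, v). (c - v, c - u)"])
     (auto simp: less_pairs_def)

lemma prod_prod_diff_remove:
  assumes "finite A"
  shows "(\<Prod>r\<in>A. \<Prod>t\<in>A - {r}. r - t) = (-1) ^ card (less_pairs A) * pair_diff_prod A ^ 2"
proof -
  have "(\<Prod>r\<in>A. \<Prod>t\<in>A - {r}. r - t) = (\<Prod>(r, t)\<in>Sigma A (\<lambda>r. A - {r}). r - t)"
    using assms by (simp add: prod.Sigma)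
  also have "Sigma A (\<lambda>r. A - {r}) = less_pairs A \<union> prod.swap ` less_pairs A"
    by (auto simp: less_pairs_def image_iff)
  also have "(\<Prod>(r, t)\<in>less_pairs A \<union> prod.swap ` less_pairs A. r - t)
      = (\<Prod>(r, t)\<in>less_pairs A. r - t) * pair_diff_prod A"
    unfolding pair_diff_prod_def
    by (subst prod.union_disjoint) (use assms in \<open>auto simp: prod.reindex\<close>)
  also have "(\<Prod>(r, t)\<in>less_pairs A. r - t) = (-1) ^ card (less_pairs A) * pair_diff_prod A"
    unfolding pair_diff_prod_def by (subst prod_uminus[symmetric]) (auto intro: prod.cong)
  finally show ?thesis
    by (simp add: power2_eq_square)
qed

lemma fact_eq_prod_int: "fact n = (\<Prod>k\<in>{1..int n}. k)"
proof (induction n)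
  case (Suc n)
  have "{1..int (Suc n)} = insert (int n + 1) {1..int n}"
    by auto
  then show ?case
    using Suc by (simp add: algebra_simps)
qed simp

lemma pair_diff_prod_atLeastAtMost: "pair_diff_prod {1..int N} = (\<Prod>k<N. fact k)"
proof (induction N)
  case 0
  then show ?case
    by (simp add: pair_diff_prod_def less_pairs_def)
next
  case (Suc N)
  have split: "less_pairs {1..int (Suc N)} = less_pairs {1..int N} \<union> (\<lambda>u. (u, int N + 1)) ` {1..int N}"
    by (auto simp: less_pairs_def)
  have "(\<Prod>u\<in>{1..int N}. int N + 1 - u) = fact N"
    unfolding fact_eq_prod_int
    by (rule prod.reindex_bij_witness[where i = "\<lambda>u. int N + 1 - u" and j = "\<lambda>u. int N + 1 - u"]) auto
  then have "pair_diff_prod {1..int (Suc N)} = pair_diff_prod {1..int N} * fact N"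
    unfolding pair_diff_prod_def split
    by (subst prod.union_disjoint) (simp_all add: prod.reindex inj_on_def, auto simp: less_pairs_def)
  then show ?case
    using Suc by simp
qed

lemma prod_lessThan_Suc_double:
  "(\<Prod>k<Suc (2 * n). f k) = (\<Prod>k<n. f k * f (2 * n - k)) * f n"
proof -
  have split: "{..<Suc (2 * n)} = {..<n} \<union> insert n {Suc n..<Suc (2 * n)}"
    by auto
  have "(\<Prod>k<Suc (2 * n). f k) = (\<Prod>k<n. f k) * (f n * (\<Prod>k\<in>{Suc n..<Suc (2 * n)}. f k))"
    unfolding split by (subst prod.union_disjoint) auto
  also have "(\<Prod>k\<in>{Suc n..<Suc (2 * n)}. f k) = (\<Prod>k<n. f (2 * n - k))"
    by (intro prod.reindex_bij_witness[where i = "\<lambda>k. 2 * n - k" and j = "\<lambda>k. 2 * n - k"]) auto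
  finally show ?thesis
    by (simp add: prod.distrib ac_simps)
qed

section \<open>Squares in the lower half modulo an odd prime\<close>

definition half_range :: "int \<Rightarrow> int set" where
  "half_range p = {1..(p - 1) div 2}"

definition sq_residues :: "int \<Rightarrow> int \<Rightarrow> int set" where
  "sq_residues p c = (\<lambda>j. (c * j^2) mod p) ` half_range p"

definition sq_diff_prod :: "int \<Rightarrow> int" where
  "sq_diff_prod p = (\<Prod>(j, k)\<in>less_pairs (half_range p). k^2 - j^2)"

lemma sp_squared: "sp p c ^ 2 = 1"
  by (simp add: sp_def flip: power_mult)

lemma abs_sp: "\<bar>sp p c\<bar> = 1"
  by (simp add: sp_def power_abs)

lemma abs_delta: "\<bar>delta c p\<bar> = 1"
  by (simp add: delta_def)

lemma Legendre_eq_1_iff: "Legendre a p = 1 \<longleftrightarrow> QuadRes p a \<and> \<not> p dvd a"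
  by (simp add: Legendre_def cong_0_iff)

lemma Legendre_eq_minus_1_iff: "Legendre a p = -1 \<longleftrightarrow> \<not> QuadRes p a \<and> \<not> p dvd a"
  by (simp add: Legendre_def cong_0_iff)

locale odd_prime =
  fixes p :: int
  assumes prime_p: "prime p" and odd_p: "odd p"
begin

abbreviation half :: nat where
  "half \<equiv> nat ((p - 1) div 2)"

abbreviation residue_set :: "int set" where
  "residue_set \<equiv> sq_residues p 1"

abbreviation nonresidue_set :: "int set" where
  "nonresidue_set \<equiv> {1..p - 1} - residue_set"

lemma three_le_p: "3 \<le> p"
  using prime_ge_2_int[OF prime_p] odd_p by (cases "p = 2") auto

lemma double_half: "2 * ((p - 1) div 2) = p - 1"
  using odd_p by presburger

lemma nat_p_minus_one: "nat (p - 1) = 2 * half"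
  using double_half three_le_p by linarith

lemma nat_p: "nat p = 2 * half + 1"
  using double_half three_le_p by linarith

lemma finite_half_range [simp]: "finite (half_range p)"
  by (simp add: half_range_def)

lemma card_half_range: "card (half_range p) = half"
  by (simp add: half_range_def)

lemma not_dvd_one [simp]: "\<not> p dvd 1"
  using prime_p not_prime_unit by blast

lemma coprime_of_not_dvd: "\<not> p dvd x \<Longrightarrow> coprime x p"
  using prime_p by (simp add: coprime_commute prime_imp_coprime)

lemma eq_zero_of_dvd: "p dvd x \<Longrightarrow> \<bar>x\<bar> < p \<Longrightarrow> x = 0"
  using dvd_imp_le_int[of x p] by fastforce

lemma not_dvd_of_bounds: "0 < x \<Longrightarrow> x < p \<Longrightarrow> \<not> p dvd x"
  using eq_zero_of_dvd by fastforce

lemma cong_abs_one_imp_eq: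
  assumes "\<bar>x\<bar> = 1" "\<bar>y\<bar> = 1" "[x = y] (mod p)"
  shows "x = y"
proof (rule ccontr)
  assume "x \<noteq> y"
  then have "p dvd 2"
    using assms by (auto simp: cong_iff_dvd_diff abs_if split: if_splits)
  then show False
    using not_dvd_of_bounds[of 2] three_le_p by simp
qed

lemma not_dvd_half_range: "j \<in> half_range p \<Longrightarrow> \<not> p dvd j"
  using double_half by (intro not_dvd_of_bounds) (auto simp: half_range_def)

lemma eq_of_dvd_sq_diff:
  assumes "j \<in> half_range p" "k \<in> half_range p" "p dvd k^2 - j^2"
  shows "j = k"
proof -
  have "p dvd (k - j) * (k + j)"
    using assms(3) by (simp add: power2_eq_square algebra_simps)
  moreover have "\<not> p dvd k + j"
    using assms double_half by (intro not_dvd_of_bounds) (auto simp: half_range_def)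
  ultimately have "p dvd k - j"
    using prime_p by (simp add: prime_dvd_mult_iff)
  moreover have "\<bar>k - j\<bar> < p"
    using assms double_half by (auto simp: half_range_def)
  ultimately show ?thesis
    using eq_zero_of_dvd by fastforce
qed

lemma inj_on_sq_mod:
  assumes "\<not> p dvd c"
  shows "inj_on (\<lambda>j. (c * j^2) mod p) (half_range p)"
proof (rule inj_onI)
  fix j k
  assume jk: "j \<in> half_range p" "k \<in> half_range p" and "(c * j^2) mod p = (c * k^2) mod p"
  then have "p dvd c * (k^2 - j^2)"
    by (metis mod_eq_dvd_iff right_diff_distrib)
  then have "p dvd k^2 - j^2"
    using assms prime_p by (simp add: prime_dvd_mult_iff)
  then show "j = k"
    using eq_of_dvd_sq_diff jk by blast
qed

lemma card_sq_residues: "\<not> p dvd c \<Longrightarrow> card (sq_residues p c) = half"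
  by (simp add: sq_residues_def card_image inj_on_sq_mod card_half_range)

lemma finite_sq_residues [simp]: "finite (sq_residues p c)"
  by (simp add: sq_residues_def)

lemma sq_residues_subset:
  assumes "\<not> p dvd c"
  shows "sq_residues p c \<subseteq> {1..p - 1}"
proof
  fix x
  assume "x \<in> sq_residues p c"
  then obtain j where j: "j \<in> half_range p" and x: "x = (c * j^2) mod p"
    by (auto simp: sq_residues_def)
  have "\<not> p dvd c * j^2"
    using assms not_dvd_half_range[OF j] prime_p by (simp add: prime_dvd_mult_iff prime_dvd_power_iff)
  then have "x \<noteq> 0"
    using x by (simp add: dvd_eq_mod_eq_0)
  moreover have "0 \<le> x" "x < p"
    using x three_le_p by simp_all
  ultimately show "x \<in> {1..p - 1}"
    by simp
qed

lemma sp_eq_inversions: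
  "sp p c = (-1) ^ card {(j, k) \<in> less_pairs (half_range p). (c * k^2) mod p < (c * j^2) mod p}"
  unfolding sp_def by (rule arg_cong[where f = "\<lambda>S. (-1) ^ card S"]) (auto simp: half_range_def)

lemma sp_mult_pair_diff_prod_cong:
  assumes "\<not> p dvd c"
  shows "[sp p c * pair_diff_prod (sq_residues p c)
    = c ^ card (less_pairs (half_range p)) * sq_diff_prod p] (mod p)"
proof -
  let ?f = "\<lambda>j. (c * j^2) mod p"
  have "sp p c * pair_diff_prod (sq_residues p c) = (\<Prod>(j, k)\<in>less_pairs (half_range p). ?f k - ?f j)"
    unfolding sp_eq_inversions sq_residues_def
    by (rule prod_less_pairs_diff_image[OF inj_on_sq_mod[OF assms] finite_half_range, symmetric])
  also have "[\<dots> = (\<Prod>(j, k)\<in>less_pairs (half_range p). c * (k^2 - j^2))] (mod p)"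
    by (rule cong_prod) (auto simp: cong_def mod_diff_eq right_diff_distrib)
  also have "(\<Prod>(j, k)\<in>less_pairs (half_range p). c * (k^2 - j^2))
      = c ^ card (less_pairs (half_range p)) * sq_diff_prod p"
    by (simp add: sq_diff_prod_def prod.distrib case_prod_beta)
  finally show ?thesis .
qed

lemma sq_residues_uminus:
  assumes "\<not> p dvd c"
  shows "sq_residues p (-c) = (\<lambda>x. p - x) ` sq_residues p c"
  unfolding sq_residues_def image_image
proof (rule image_cong[OF refl])
  fix j
  assume "j \<in> half_range p"
  then have "(c * j^2) mod p \<noteq> 0"
    using assms not_dvd_half_range prime_p by (simp add: prime_dvd_mult_iff prime_dvd_power_iff dvd_eq_mod_eq_0[symmetric])
  then show "(- c * j^2) mod p = p - (c * j^2) mod p"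
    by (simp add: zmod_zminus1_eq_if)
qed

lemma exists_half_range_sq_cong:
  assumes "\<not> p dvd y"
  shows "\<exists>k\<in>half_range p. [y^2 = k^2] (mod p)"
proof -
  define r where "r = y mod p"
  have "r \<noteq> 0" "0 \<le> r" "r < p"
    using assms three_le_p by (simp_all add: r_def dvd_eq_mod_eq_0)
  then have r: "0 < r" "r < p"
    by simp_all
  have y_r: "[y^2 = r^2] (mod p)"
    by (simp add: r_def cong_def power_mod)
  show ?thesis
  proof (cases "r \<le> (p - 1) div 2")
    case True
    then show ?thesis
      using r y_r by (auto simp: half_range_def)
  next
    case False
    have "[r^2 = (p - r)^2] (mod p)"
      by (simp add: cong_iff_dvd_diff power2_eq_square algebra_simps)
    then show ?thesis
      using False r double_half y_r cong_trans by (intro bexI[of _ "p - r"]) (auto simp: half_range_def)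
  qed
qed

lemma QuadRes_of_mult_square_cong:
  assumes "[b * j^2 = k^2] (mod p)" and "\<not> p dvd j"
  shows "QuadRes p b"
proof -
  obtain j' where j': "[j * j' = 1] (mod p)"
    using cong_solve_coprime_int coprime_of_not_dvd[OF assms(2)] by blast
  have "[b = b * (j * j')^2] (mod p)"
    using cong_scalar_left[OF cong_pow[OF j', of 2], of b] by (simp add: cong_sym)
  also have "b * (j * j')^2 = (b * j^2) * j'^2"
    by (simp add: power_mult_distrib)
  also have "[\<dots> = k^2 * j'^2] (mod p)"
    using assms(1) by (rule cong_scalar_right)
  also have "k^2 * j'^2 = (k * j')^2"
    by (simp add: power_mult_distrib)
  finally show ?thesis
    unfolding QuadRes_def using cong_sym by blast
qed

lemma sq_residues_QuadRes:
  assumes "QuadRes p a" and "\<not> p dvd a"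
  shows "sq_residues p a = residue_set"
proof (rule card_subset_eq)
  show "sq_residues p a \<subseteq> residue_set"
  proof
    fix x
    assume "x \<in> sq_residues p a"
    then obtain j where j: "j \<in> half_range p" and x: "x = (a * j^2) mod p"
      by (auto simp: sq_residues_def)
    obtain t where t: "[t^2 = a] (mod p)"
      using assms(1) by (auto simp: QuadRes_def)
    have "\<not> p dvd t"
      using t assms(2) prime_p by (metis cong_dvd_iff prime_dvd_power_iff zero_less_numeral)
    then have "\<not> p dvd t * j"
      using not_dvd_half_range[OF j] prime_p by (simp add: prime_dvd_mult_iff)
    then obtain k where k: "k \<in> half_range p" "[(t * j)^2 = k^2] (mod p)"
      using exists_half_range_sq_cong by blast
    have "[a * j^2 = (t * j)^2] (mod p)"
      using cong_scalar_right[OF t, of "j^2"] by (simp add: cong_sym power_mult_distrib)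
    then have "x = (1 * k^2) mod p"
      using x k(2) by (simp add: cong_def)
    then show "x \<in> residue_set"
      using k(1) by (auto simp: sq_residues_def)
  qed
  show "card (sq_residues p a) = card residue_set"
    using assms(2) by (simp add: card_sq_residues card_sq_residues[OF not_dvd_one])
qed simp

lemma sq_residues_not_QuadRes:
  assumes "\<not> QuadRes p b" and "\<not> p dvd b"
  shows "sq_residues p b = nonresidue_set"
proof (rule card_subset_eq)
  have "x \<notin> residue_set" if x_b: "x \<in> sq_residues p b" for x
  proof
    assume "x \<in> residue_set"
    then obtain k where k: "k \<in> half_range p" "x = k^2 mod p"
      by (auto simp: sq_residues_def)
    obtain j where j: "j \<in> half_range p" "x = (b * j^2) mod p"
      using x_b by (auto simp: sq_residues_def)
    have "[b * j^2 = k^2] (mod p)"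
      using j(2) k(2) by (simp add: cong_def)
    then show False
      using QuadRes_of_mult_square_cong not_dvd_half_range[OF j(1)] assms(1) by blast
  qed
  then show "sq_residues p b \<subseteq> nonresidue_set"
    using sq_residues_subset[OF assms(2)] by blast
  have "card nonresidue_set = nat (p - 1) - half"
    using sq_residues_subset[OF not_dvd_one] by (simp add: card_Diff_subset card_sq_residues[OF not_dvd_one])
  then show "card (sq_residues p b) = card nonresidue_set"
    using assms(2) by (simp add: card_sq_residues nat_p_minus_one)
qed simp

lemma Legendre_cong_power_half: "[Legendre c p = c ^ half] (mod p)"
proof -
  have "prime (nat p)" "2 < nat p"
    using prime_p three_le_p by auto
  from euler_criterion[OF this, of c] show ?thesis
    using three_le_p by (simp add: nat_diff_distrib nat_div_distrib)
qed

lemma QuadRes_minus_one_iff: "QuadRes p (-1) \<longleftrightarrow> p mod 4 = 1"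
proof -
  have "Legendre (-1) p = (-1) ^ half"
  proof (rule cong_abs_one_imp_eq)
    show "\<bar>Legendre (-1) p\<bar> = 1"
      using three_le_p by (simp add: Legendre_def cong_0_iff)
  qed (simp_all add: Legendre_cong_power_half)
  moreover have "QuadRes p (-1) \<longleftrightarrow> Legendre (-1) p = 1"
    using three_le_p by (simp add: Legendre_eq_1_iff)
  ultimately have "QuadRes p (-1) \<longleftrightarrow> even half"
    by (simp add: minus_one_power_iff)
  also have "\<dots> \<longleftrightarrow> p mod 4 = 1"
    using odd_p three_le_p by (simp add: even_nat_iff) presburger
  finally show ?thesis .
qed

lemma half_1mod4:
  assumes "p mod 4 = 1"
  shows "half = 2 * nat ((p - 1) div 4)" "nat ((p + 3) div 4) = nat ((p - 1) div 4) + 1"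
    "1 \<le> nat ((p - 1) div 4)"
proof -
  obtain q where "p = 4 * q + 1"
    using assms by (metis mod_div_mult_eq add.commute mult.commute)
  then show "half = 2 * nat ((p - 1) div 4)" "nat ((p + 3) div 4) = nat ((p - 1) div 4) + 1"
    "1 \<le> nat ((p - 1) div 4)"
    using three_le_p by auto
qed

lemma half_3mod4:
  assumes "p mod 4 = 3"
  shows "half = 2 * nat ((p - 3) div 4) + 1"
proof -
  obtain q where "p = 4 * q + 3"
    using assms by (metis mod_div_mult_eq add.commute mult.commute)
  then show ?thesis
    using three_le_p by auto
qed

section \<open>Wilson-type congruences\<close>

lemma wilson_int: "[fact (nat p - 1) = (-1::int)] (mod p)"
  using wilson_theorem[of "nat p"] prime_p three_le_p by simp

lemma fact_mult_fact_cong: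
  "k < nat p \<Longrightarrow> [fact k * fact (nat p - 1 - k) = (-1::int) ^ (k + 1)] (mod p)"
proof (induction k)
  case 0
  then show ?case
    using wilson_int by simp
next
  case (Suc k)
  define F where "F = (fact (nat p - 1 - Suc k) :: int)"
  have "nat p - 1 - k = Suc (nat p - 1 - Suc k)" "int (nat p - 1 - k) = p - 1 - int k"
    using Suc.prems by auto
  then have "fact k * fact (nat p - 1 - k) = fact k * F * (p - 1 - int k)"
    unfolding F_def by (metis fact_Suc mult.commute mult.left_commute)
  also have "[\<dots> = fact k * F * (- int (Suc k))] (mod p)"
    by (rule cong_scalar_left) (simp add: cong_iff_dvd_diff)
  also have "fact k * F * (- int (Suc k)) = - (fact (Suc k) * F)"
    by (simp add: algebra_simps)
  finally have "[- (fact (Suc k) * F) = (-1) ^ (k + 1)] (mod p)"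
    using Suc cong_sym cong_trans by (metis Suc_lessD)
  then show ?case
    unfolding F_def by (metis cong_minus_minus_iff minus_minus power_Suc mult_minus1 add_Suc)
qed

lemma fact_half_sq_cong: "[fact half ^ 2 = (-1::int) ^ (half + 1)] (mod p)"
  using fact_mult_fact_cong[of half] nat_p by (simp add: power2_eq_square)

lemma prod_fact_lessThan_cong:
  "[(\<Prod>k<nat p - 1. fact k) = (-1) ^ (half * (half + 1) div 2 + 1) * (fact half :: int)] (mod p)"
proof -
  let ?P = "nat p" and ?n = half
  have P: "?P = Suc (2 * ?n)"
    using nat_p by simp
  have "(\<Prod>k<?P. fact k :: int) = (\<Prod>k<?P - 1. fact k) * fact (?P - 1)"
    using P by simp
  also have "[\<dots> = (\<Prod>k<?P - 1. fact k) * (-1)] (mod p)"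
    by (rule cong_scalar_left[OF wilson_int])
  finally have lhs: "[(\<Prod>k<?P. fact k :: int) = - (\<Prod>k<?P - 1. fact k)] (mod p)"
    by simp
  have "(\<Prod>k<?P. fact k :: int) = (\<Prod>k<?n. fact k * fact (?P - 1 - k)) * fact ?n"
    using prod_lessThan_Suc_double[of fact ?n] unfolding P by simp
  also have "[\<dots> = (\<Prod>k<?n. (-1) ^ (k + 1)) * fact ?n] (mod p)"
    using P by (intro cong_scalar_right cong_prod fact_mult_fact_cong) auto
  also have "(\<Prod>k<?n. (-1::int) ^ (k + 1)) = (-1) ^ (\<Sum>k<?n. k + 1)"
    by (simp only: power_sum)
  also have "(\<Sum>k<?n. k + 1) = ?n * (?n + 1) div 2"
  proof -
    have "2 * (\<Sum>k<m. k + 1) = m * (m + 1)" for m :: nat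
      by (induction m) auto
    then show ?thesis
      by (metis nonzero_mult_div_cancel_left zero_neq_numeral)
  qed
  finally have "[- (\<Prod>k<?P - 1. fact k) = (-1) ^ (?n * (?n + 1) div 2) * (fact ?n :: int)] (mod p)"
    using lhs cong_sym cong_trans by blast
  then have "[(\<Prod>k<?P - 1. fact k) = - ((-1) ^ (?n * (?n + 1) div 2) * (fact ?n :: int))] (mod p)"
    by (metis cong_minus_minus_iff minus_minus)
  then show ?thesis
    by simp
qed

lemma pair_diff_prod_units_cong:
  "[pair_diff_prod {1..p - 1} = (-1) ^ (half * (half + 1) div 2 + 1) * fact half] (mod p)"
proof -
  have "int (nat p - 1) = p - 1"
    using three_le_p by simp
  then show ?thesis
    using prod_fact_lessThan_cong pair_diff_prod_atLeastAtMost[of "nat p - 1"] by simp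
qed

lemma prod_diff_units_cong:
  assumes r: "r \<in> {1..p - 1}"
  shows "[r * (\<Prod>t\<in>{1..p - 1} - {r}. r - t) = -1] (mod p)"
proof -
  let ?U = "{1..p - 1}"
  \<comment> \<open>\<open>t \<mapsto> (r - t) mod p\<close> permutes \<open>?U - {r}\<close>, so the product is \<open>(p - 1)! / r\<close>\<close>
  have maps: "(r - t) mod p \<in> ?U - {r}" if t: "t \<in> ?U - {r}" for t
  proof -
    have "\<bar>r - t\<bar> < p"
      using r t by auto
    then have "(r - t) mod p \<noteq> 0"
      using t eq_zero_of_dvd[of "r - t"] by (auto simp: dvd_eq_mod_eq_0[symmetric])
    moreover have "(r - t) mod p \<noteq> r"
    proof
      assume "(r - t) mod p = r"
      then have "[r - t = r] (mod p)"
        using r by (simp add: cong_def)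
      then have "p dvd t"
        by (simp add: cong_iff_dvd_diff)
      then show False
        using t not_dvd_of_bounds by auto
    qed
    moreover have "0 \<le> (r - t) mod p" "(r - t) mod p < p"
      using three_le_p by simp_all
    ultimately show ?thesis
      by auto
  qed
  have invol: "(r - (r - t) mod p) mod p = t" if "t \<in> ?U - {r}" for t
    using that by (simp add: mod_diff_right_eq)
  have "[(\<Prod>t\<in>?U - {r}. r - t) = (\<Prod>t\<in>?U - {r}. (r - t) mod p)] (mod p)"
    by (rule cong_prod) (simp add: cong_def)
  also have "(\<Prod>t\<in>?U - {r}. (r - t) mod p) = (\<Prod>t\<in>?U - {r}. t)"
    by (rule prod.reindex_bij_witness[where i = "\<lambda>t. (r - t) mod p" and j = "\<lambda>t. (r - t) mod p"])
       (use maps invol in auto)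
  finally have "[r * (\<Prod>t\<in>?U - {r}. r - t) = (\<Prod>t\<in>?U. t)] (mod p)"
    using r by (simp add: cong_scalar_left prod.remove)
  also have "(\<Prod>t\<in>?U. t) = fact (nat p - 1)"
    using three_le_p by (simp add: fact_eq_prod_int)
  finally show ?thesis
    using wilson_int cong_trans by blast
qed

lemma prod_half_range: "(\<Prod>j\<in>half_range p. j) = fact half"
  by (simp add: half_range_def fact_eq_prod_int)

lemma not_dvd_fact_half: "\<not> p dvd fact half"
  using prime_p not_dvd_half_range by (simp add: prod_half_range[symmetric] prime_dvd_prod_iff)

lemma prod_residue_set_cong: "[(\<Prod>x\<in>residue_set. x) = (-1) ^ (half + 1)] (mod p)"
proof -
  have "(\<Prod>x\<in>residue_set. x) = (\<Prod>j\<in>half_range p. (1 * j^2) mod p)"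
    unfolding sq_residues_def by (rule prod.reindex[OF inj_on_sq_mod[OF not_dvd_one], unfolded comp_def])
  also have "[\<dots> = (\<Prod>j\<in>half_range p. j)^2] (mod p)"
    unfolding prod_power_distrib by (rule cong_prod) (simp add: cong_def)
  also have "(\<Prod>j\<in>half_range p. j) = fact half"
    by (rule prod_half_range)
  finally show ?thesis
    using fact_half_sq_cong cong_trans by blast
qed

section \<open>Comparing residues and non-residues\<close>

lemma not_dvd_pair_diff_prod:
  assumes "A \<subseteq> {1..p - 1}"
  shows "\<not> p dvd pair_diff_prod A"
proof -
  have "\<not> p dvd v - u" if "(u, v) \<in> less_pairs A" for u v
  proof -
    have "u \<in> {1..p - 1}" "v \<in> {1..p - 1}" "u < v"
      using that assms by auto
    then show ?thesis
      by (intro not_dvd_of_bounds) auto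
  qed
  then show ?thesis
    unfolding pair_diff_prod_def using prime_p finite_subset[OF assms]
    by (auto simp: prime_dvd_prod_iff)
qed

lemma sp_mult_cong:
  assumes a: "QuadRes p a" "\<not> p dvd a" and b: "\<not> QuadRes p b" "\<not> p dvd b"
    and kappa: "[pair_diff_prod nonresidue_set = \<kappa> * pair_diff_prod residue_set] (mod p)"
  shows "[sp p a * sp p b * \<kappa> = (a * b) ^ card (less_pairs (half_range p))] (mod p)"
proof -
  let ?m = "card (less_pairs (half_range p))" and ?D = "sq_diff_prod p"
  let ?Q = "pair_diff_prod residue_set"
  have La: "[sp p a * ?Q = a ^ ?m * ?D] (mod p)"
    using sp_mult_pair_diff_prod_cong[OF a(2)] sq_residues_QuadRes[OF a] by simp
  have "[sp p b * (\<kappa> * ?Q) = b ^ ?m * ?D] (mod p)"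
    using sp_mult_pair_diff_prod_cong[OF b(2)] sq_residues_not_QuadRes[OF b]
      cong_scalar_left[OF kappa, of "sp p b"] by (metis cong_sym cong_trans)
  with La have "[(sp p a * ?Q) * (sp p b * (\<kappa> * ?Q)) = (a ^ ?m * ?D) * (b ^ ?m * ?D)] (mod p)"
    by (rule cong_mult)
  then have "[sp p a * sp p b * \<kappa> * ?Q^2 = (a * b) ^ ?m * ?D^2] (mod p)"
    by (simp add: power2_eq_square power_mult_distrib mult_ac)
  moreover have "[?D^2 = ?Q^2] (mod p)"
  proof -
    have "[(sp p 1 * ?Q)^2 = ?D^2] (mod p)"
      using cong_pow[OF sp_mult_pair_diff_prod_cong[OF not_dvd_one], of 2] by simp
    then show ?thesis
      by (simp add: power_mult_distrib sp_squared cong_sym)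
  qed
  ultimately have "[sp p a * sp p b * \<kappa> * ?Q^2 = (a * b) ^ ?m * ?Q^2] (mod p)"
    by (metis cong_scalar_left cong_trans)
  moreover have "coprime (?Q^2) p"
    using coprime_of_not_dvd not_dvd_pair_diff_prod[OF sq_residues_subset[OF not_dvd_one]]
    by simp
  ultimately show ?thesis
    by (simp add: cong_mult_rcancel)
qed

lemma pair_diff_prod_nonresidues_3mod4:
  assumes "p mod 4 = 3"
  shows "pair_diff_prod nonresidue_set = pair_diff_prod residue_set"
proof -
  have "\<not> QuadRes p (-1)"
    using assms QuadRes_minus_one_iff by simp
  then have "nonresidue_set = (\<lambda>x. p - x) ` residue_set"
    using sq_residues_not_QuadRes[of "-1"] sq_residues_uminus[OF not_dvd_one] three_le_p by simp
  then show ?thesis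
    by (simp add: pair_diff_prod_reflect)
qed

lemma prod_cross_diff_cong:
  assumes "A \<subseteq> {1..p - 1}"
  shows "[(\<Prod>A) * (\<Prod>(a, b)\<in>A \<times> ({1..p - 1} - A). a - b)
    * ((-1) ^ card (less_pairs A) * pair_diff_prod A ^ 2) = (-1) ^ card A] (mod p)"
proof -
  let ?U = "{1..p - 1}"
  have fin: "finite A"
    using assms finite_subset by blast
  have "(\<Prod>r\<in>A. r * (\<Prod>t\<in>?U - {r}. r - t))
      = (\<Prod>r\<in>A. r * ((\<Prod>s\<in>?U - A. r - s) * (\<Prod>t\<in>A - {r}. r - t)))"
  proof (rule prod.cong[OF refl])
    fix r
    assume "r \<in> A"
    then have "?U - {r} = (?U - A) \<union> (A - {r})" "(?U - A) \<inter> (A - {r}) = {}"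
      using assms by auto
    then show "r * (\<Prod>t\<in>?U - {r}. r - t) = r * ((\<Prod>s\<in>?U - A. r - s) * (\<Prod>t\<in>A - {r}. r - t))"
      using fin by (simp add: prod.union_disjoint)
  qed
  also have "\<dots> = (\<Prod>A) * (\<Prod>(a, b)\<in>A \<times> (?U - A). a - b) * (\<Prod>r\<in>A. \<Prod>t\<in>A - {r}. r - t)"
    by (simp add: prod.distrib prod.cartesian_product)
  also have "(\<Prod>r\<in>A. \<Prod>t\<in>A - {r}. r - t) = (-1) ^ card (less_pairs A) * pair_diff_prod A ^ 2"
    by (rule prod_prod_diff_remove[OF fin])
  finally have "(\<Prod>r\<in>A. r * (\<Prod>t\<in>?U - {r}. r - t))
      = (\<Prod>A) * (\<Prod>(a, b)\<in>A \<times> (?U - A). a - b) * ((-1) ^ card (less_pairs A) * pair_diff_prod A ^ 2)" .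
  moreover have "[(\<Prod>r\<in>A. r * (\<Prod>t\<in>?U - {r}. r - t)) = (\<Prod>r\<in>A. -1)] (mod p)"
    using assms by (intro cong_prod prod_diff_units_cong) auto
  ultimately show ?thesis
    by simp
qed

lemma reflect_residue_sets_1mod4:
  assumes "p mod 4 = 1"
  shows "(\<lambda>x. p - x) ` residue_set = residue_set" "(\<lambda>x. p - x) ` nonresidue_set = nonresidue_set"
proof -
  show reflect: "(\<lambda>x. p - x) ` residue_set = residue_set"
    using assms QuadRes_minus_one_iff sq_residues_QuadRes[of "-1"] sq_residues_uminus[OF not_dvd_one] three_le_p
    by simp
  have "(\<lambda>x. p - x) ` {1..p - 1} = {1..p - 1}"
    by (auto simp: image_iff intro!: bexI[where x = "p - _"])
  then show "(\<lambda>x. p - x) ` nonresidue_set = nonresidue_set"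
    using reflect by (simp add: image_set_diff inj_on_def)
qed

lemma pair_diff_prod_units_split_1mod4:
  assumes "p mod 4 = 1"
  shows "pair_diff_prod {1..p - 1} = pair_diff_prod residue_set * pair_diff_prod nonresidue_set
    * (\<Prod>(r, s)\<in>residue_set \<times> nonresidue_set. r - s)"
proof -
  have sub: "residue_set \<subseteq> {1..p - 1}"
    by (rule sq_residues_subset[OF not_dvd_one])
  have card: "card residue_set = half" "card nonresidue_set = half"
    using sub card_sq_residues[OF not_dvd_one] by (simp_all add: card_Diff_subset finite_subset nat_p_minus_one)
  \<comment> \<open>by the symmetry of both sets the sign in \<open>pair_diff_prod_Un\<close> is \<open>+1\<close>\<close>
  have "2 * card {(r, s) \<in> residue_set \<times> nonresidue_set. r < s} = half * half"
    using card_cross_less_reflect[OF _ _ _ reflect_residue_sets_1mod4[OF assms]] card sub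
    by (simp add: finite_subset)
  moreover have "even c" if "2 * c = h * h" and "even h" for c h :: nat
    using that by (auto elim!: evenE)
  ultimately have "even (card {(r, s) \<in> residue_set \<times> nonresidue_set. r < s})"
    using half_1mod4(1)[OF assms] by simp
  then show ?thesis
    using pair_diff_prod_Un[of residue_set nonresidue_set] sub by (simp add: finite_subset Un_absorb1)
qed

lemma prod_cross_diff_residues_cong:
  assumes "p mod 4 = 1"
  shows "[(-1) ^ (card (less_pairs residue_set) + 1) * (\<Prod>(r, s)\<in>residue_set \<times> nonresidue_set. r - s)
    * pair_diff_prod residue_set ^ 2 = 1] (mod p)"
proof -
  let ?Y = "\<Prod>(r, s)\<in>residue_set \<times> nonresidue_set. r - s"
  let ?W = "(-1) ^ card (less_pairs residue_set) * pair_diff_prod residue_set ^ 2"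
  have even_half: "even half"
    using half_1mod4[OF assms] by simp
  have "[(\<Prod>residue_set) * (?Y * ?W) = 1] (mod p)"
    using prod_cross_diff_cong[OF sq_residues_subset[OF not_dvd_one]] card_sq_residues[OF not_dvd_one] even_half
    by (simp add: mult.assoc)
  moreover have "[(\<Prod>residue_set) * (?Y * ?W) = (-1) * (?Y * ?W)] (mod p)"
    using prod_residue_set_cong even_half by (intro cong_scalar_right) simp
  ultimately have "[(-1) * (?Y * ?W) = 1] (mod p)"
    using cong_sym cong_trans by blast
  then show ?thesis
    by (simp add: mult_ac)
qed

lemma pair_diff_prod_nonresidues_1mod4:
  assumes "p mod 4 = 1"
  shows "[pair_diff_prod nonresidue_set = fact half * pair_diff_prod residue_set] (mod p)"
proof -
  let ?Q = "pair_diff_prod residue_set" and ?m = "card (less_pairs residue_set)"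
  let ?s = "half * (half + 1) div 2"
  have "(-1) ^ (?m + 1) * pair_diff_prod {1..p - 1} * ?Q
      = pair_diff_prod nonresidue_set
        * ((-1) ^ (?m + 1) * (\<Prod>(r, s)\<in>residue_set \<times> nonresidue_set. r - s) * ?Q ^ 2)"
    unfolding pair_diff_prod_units_split_1mod4[OF assms] by (simp add: power2_eq_square mult_ac)
  also have "[\<dots> = pair_diff_prod nonresidue_set * 1] (mod p)"
    by (rule cong_scalar_left[OF prod_cross_diff_residues_cong[OF assms]])
  finally have "[pair_diff_prod nonresidue_set = (-1) ^ (?m + 1) * pair_diff_prod {1..p - 1} * ?Q] (mod p)"
    by (simp add: cong_sym)
  also have "[(-1) ^ (?m + 1) * pair_diff_prod {1..p - 1} * ?Q
      = (-1) ^ (?m + 1) * ((-1) ^ (?s + 1) * fact half) * ?Q] (mod p)"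
    by (intro cong_scalar_right cong_scalar_left pair_diff_prod_units_cong)
  also have "(-1) ^ (?m + 1) * ((-1) ^ (?s + 1) * fact half) * ?Q = fact half * ?Q"
  proof -
    have "2 * ?m = half * (half - 1)"
      using card_less_pairs[of residue_set] card_sq_residues[OF not_dvd_one] by simp
    moreover have "even half"
      using half_1mod4(1)[OF assms] by simp
    moreover have "even (m + 1 + (h * (h + 1) div 2 + 1))" if "2 * m = h * (h - 1)" and "even h" for m h :: nat
    proof -
      have "2 * (m + h * (h + 1) div 2) = 2 * (h * h)"
        using that(1) by (cases h) (simp_all add: algebra_simps)
      then have "m + h * (h + 1) div 2 = h * h"
        by (simp only: mult_cancel_left) simp
      then have "even (m + h * (h + 1) div 2)"
        using that(2) by simp
      then show ?thesis
        by simp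
    qed
    ultimately have "even (?m + 1 + (?s + 1))"
      by blast
    then show ?thesis
      by (simp add: power_add[symmetric] mult.assoc[symmetric])
  qed
  finally show ?thesis .
qed

lemma power_half_mult_cong:
  assumes "Legendre a p = 1" and "Legendre b p = -1"
  shows "[(a * b) ^ half = -1] (mod p)"
  using cong_mult[OF Legendre_cong_power_half[of a] Legendre_cong_power_half[of b]] assms
  by (simp add: power_mult_distrib cong_sym)

lemma delta_cong:
  assumes "p mod 4 = 1" and "[c ^ half = -1] (mod p)"
  shows "[c ^ nat ((p - 1) div 4) = delta c p * fact half] (mod p)"
proof -
  define x where "x = c ^ nat ((p - 1) div 4)"
  define f where "f = (fact half :: int)"
  have "half = 2 * nat ((p - 1) div 4)"
    using half_1mod4[OF assms(1)] by simp
  then have "[x^2 = -1] (mod p)"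
    using assms(2) by (simp add: x_def power_mult[symmetric] mult.commute)
  moreover have "[f^2 = -1] (mod p)"
    using fact_half_sq_cong \<open>half = 2 * _\<close> by (simp add: f_def)
  ultimately have "[x^2 - f^2 = 0] (mod p)"
    using cong_diff by fastforce
  moreover have "x^2 - f^2 = (x - f) * (x + f)"
    by (simp add: power2_eq_square algebra_simps)
  ultimately have "p dvd (x - f) * (x + f)"
    by (simp add: cong_0_iff)
  then have "[x = f] (mod p) \<or> [x = - f] (mod p)"
    using prime_p by (auto simp: prime_dvd_mult_iff cong_iff_dvd_diff)
  then show ?thesis
    by (auto simp: delta_def x_def f_def)
qed

lemma sp_mult_3mod4:
  assumes "p mod 4 = 3" and "Legendre a p = 1" and "Legendre b p = -1"
  shows "sp p a * sp p b = (-1) ^ nat ((p - 3) div 4)"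
proof -
  define e where "e = nat ((p - 3) div 4)"
  have m: "card (less_pairs (half_range p)) = half * e"
  proof -
    have "m = h * e" if "2 * m = h * (h - 1)" "h = 2 * e + 1" for m h :: nat
      using that by simp
    then show ?thesis
      using card_less_pairs[of "half_range p"] half_3mod4[OF assms(1)] by (simp add: card_half_range e_def)
  qed
  have "[sp p a * sp p b * 1 = (a * b) ^ (half * e)] (mod p)"
    unfolding m[symmetric] using assms pair_diff_prod_nonresidues_3mod4
    by (intro sp_mult_cong) (simp_all add: Legendre_eq_1_iff Legendre_eq_minus_1_iff)
  also have "[(a * b) ^ (half * e) = (-1) ^ e] (mod p)"
    unfolding power_mult by (rule cong_pow[OF power_half_mult_cong[OF assms(2,3)]])
  finally have "[sp p a * sp p b = (-1) ^ e] (mod p)"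
    by simp
  then show ?thesis
    unfolding e_def by (rule cong_abs_one_imp_eq[rotated 2]) (simp_all add: abs_sp abs_mult)
qed

lemma sp_mult_1mod4:
  assumes "p mod 4 = 1" and "Legendre a p = 1" and "Legendre b p = -1"
  shows "sp p a * sp p b = (-1) ^ nat ((p + 3) div 4) * delta (a * b) p"
proof -
  define e where "e = nat ((p - 1) div 4)"
  have half: "half = 2 * e" and e: "1 \<le> e" and e3: "nat ((p + 3) div 4) = e + 1"
    using half_1mod4[OF assms(1)] by (simp_all add: e_def)
  have m: "card (less_pairs (half_range p)) = e + half * (e - 1)"
  proof -
    have "m = e + h * (e - 1)" if "2 * m = h * (h - 1)" "h = 2 * e" for m h :: nat
    proof -
      have "2 * m = 2 * (e + h * (e - 1))"
        using that e by (simp add: algebra_simps)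
      then show ?thesis
        by simp
    qed
    moreover have "2 * card (less_pairs (half_range p)) = half * (half - 1)"
      using card_less_pairs[of "half_range p"] by (simp add: card_half_range)
    ultimately show ?thesis
      using half by blast
  qed
  have ab: "[(a * b) ^ half = -1] (mod p)"
    by (rule power_half_mult_cong[OF assms(2,3)])
  have "[sp p a * sp p b * fact half = (a * b) ^ (e + half * (e - 1))] (mod p)"
    unfolding m[symmetric] using assms pair_diff_prod_nonresidues_1mod4
    by (intro sp_mult_cong) (simp_all add: Legendre_eq_1_iff Legendre_eq_minus_1_iff)
  also have "(a * b) ^ (e + half * (e - 1)) = (a * b) ^ e * ((a * b) ^ half) ^ (e - 1)"
    by (simp add: power_add power_mult)
  also have "[\<dots> = delta (a * b) p * fact half * (-1) ^ (e - 1)] (mod p)"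
    using delta_cong[OF assms(1) ab, folded e_def] cong_pow[OF ab] by (rule cong_mult)
  finally have "[sp p a * sp p b * fact half = (-1) ^ (e - 1) * delta (a * b) p * fact half] (mod p)"
    by (simp add: mult_ac)
  then have "[sp p a * sp p b = (-1) ^ (e - 1) * delta (a * b) p] (mod p)"
    using coprime_of_not_dvd[OF not_dvd_fact_half] by (simp add: cong_mult_rcancel)
  moreover have "(-1) ^ (e - 1) = (-1 :: int) ^ nat ((p + 3) div 4)"
    unfolding e3 using e by (cases e) simp_all
  ultimately have "[sp p a * sp p b = (-1) ^ nat ((p + 3) div 4) * delta (a * b) p] (mod p)"
    by simp
  then show ?thesis
    by (rule cong_abs_one_imp_eq[rotated 2]) (simp_all add: abs_sp abs_delta abs_mult)
qed

end

theorem lemma3p1: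
  fixes p a b :: int
  assumes "prime p" and "odd p"
    and "Legendre a p = 1" and "Legendre b p = -1"
  shows "(p mod 4 = 1 \<longrightarrow> sp p a * sp p b = (-1) ^ nat ((p + 3) div 4) * delta (a * b) p)
       \<and> (p mod 4 = 3 \<longrightarrow> sp p a * sp p b = (-1) ^ nat ((p - 3) div 4))"
proof -
  interpret odd_prime p
    using assms(1,2) by unfold_locales
  show ?thesis
    using sp_mult_1mod4[OF _ assms(3,4)] sp_mult_3mod4[OF _ assms(3,4)] by blast
qed

end
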